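(* For each integer $n\ge 1$ let $\mathbb{P}_n^{*}$ be a probability distribution on $[n]=\{1,\ldots,n\}$, written as $\mathbb{P}_n^{*}(i)=\frac{1}{n}+\varepsilon_{i,n}$ for $i\in[n]$ (so $\varepsilon_{i,n}\in[-\tfrac1n,1-\tfrac1n]$ and $\sum_{i=1}^n\varepsilon_{i,n}=0$). Write $\alpha_n=n^{1/\log\log n}$. Assume there is a constant $C$ such that for all $n$ (with $\log\log n>0$) and all primes $p>\alpha_n$, $$\sum_{l=1}^{\lfloor n/p\rfloor}\varepsilon_{lp,n}\le \frac{C}{p}.$$ Then, as $n\to\infty$, $$\frac{1}{(\log\log n)^{1/2}}\sum_{\alpha_n<p\le n}\left(\frac1p+\sum_{l=1}^{\lfloor n/p\rfloor}\varepsilon_{lp,n}\right)\to 0,$$ where the outer sum is over primes $p$ with $\alpha_n<p\le n$.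
   Context: $\lfloor\cdot\rfloor$ is the floor function; $\log$ is the natural logarithm. *)

theory Defs
  imports "HOL-Analysis.Analysis" "HOL-Computational_Algebra.Primes"
begin

definition alpha :: "nat \<Rightarrow> real" where
  "alpha n = real n powr (1 / ln (ln (real n)))"

end

theory Submission
  imports Defs "HOL-Real_Asymp.Real_Asymp"
begin

(*
  Each summand 1/p + \<Sum>\<^sub>l eps (l p) n lies between 0 and (1 + C)/p: the lower bound because
  the n div p multiples of p carry nonnegative mass, so their eps-values sum to at least
  -(n div p)/n \<ge> -1/p. Hence the whole sum is O(\<Sum> 1/p) over the primes in (alpha n, n].
  Every prime in (m, 2m] divides (2m choose m) \<le> 4^m, so \<Sum> 1/p over (m, 2m] is at most
  2 ln 2 / ln m; summing over dyadic blocks 2^j gives O(ln (ln n / ln (alpha n))) = O(ln ln ln n),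
  which is o(sqrt (ln ln n)).
*)

lemma prod_primes_dvd:
  fixes N :: nat
  assumes "N \<noteq> 0" and "\<And>p. p \<in> P \<Longrightarrow> prime p \<and> p dvd N"
  shows "\<Prod>P dvd N"
proof -
  have "P \<subseteq> prime_factors N"
    using assms by (auto simp: in_prime_factors_iff)
  then have "\<Prod>P dvd (\<Prod>p\<in>prime_factors N. p ^ multiplicity p N)"
    by (intro prod_dvd_prod_subset2)
      (auto simp: in_prime_factors_iff prime_multiplicity_gt_zero_iff intro: dvd_power)
  also have "\<dots> = N"
    using assms(1) by (simp add: prod_prime_factors)
  finally show ?thesis .
qed

lemma finite_primes_between: "finite {p. prime p \<and> a < p \<and> p \<le> (b::nat)}"
  by (rule finite_subset[of _ "{..b}"]) auto

lemma prod_primes_between_double_le_four_pow: "\<Prod>{p. prime p \<and> m < p \<and> p \<le> 2*m} \<le> (4::nat) ^ m"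
proof -
  have "p dvd (2*m choose m)" if p: "prime p" "m < p" "p \<le> 2*m" for p
  proof -
    have "p dvd fact m * fact m * (2*m choose m)"
      using p dvd_fact[of p "2*m"] prime_ge_1_nat binomial_fact_lemma[of m "2*m"] by simp
    moreover have "\<not> p dvd (fact m :: nat)"
      using p by (simp add: prime_dvd_fact_iff)
    ultimately show ?thesis
      using p(1) by (simp add: prime_dvd_mult_iff)
  qed
  then have "\<Prod>{p. prime p \<and> m < p \<and> p \<le> 2*m} \<le> (2*m choose m)"
    by (intro dvd_imp_le prod_primes_dvd) auto
  also have "\<dots> \<le> 4 ^ m"
    using binomial_le_pow2[of "2*m" m] by (simp add: power_mult)
  finally show ?thesis .
qed

lemma card_primes_between_double_le:
  fixes m :: nat
  assumes "m \<ge> 1"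
  shows "real (card {p. prime p \<and> m < p \<and> p \<le> 2*m}) * ln m \<le> real m * ln 4"
proof -
  define P where "P = {p. prime p \<and> m < p \<and> p \<le> 2*m}"
  have "m ^ card P = (\<Prod>p\<in>P. m)"
    by simp
  also have "\<dots> \<le> \<Prod>P"
    by (rule prod_mono) (auto simp: P_def)
  also have "\<dots> \<le> 4 ^ m"
    unfolding P_def by (rule prod_primes_between_double_le_four_pow)
  finally have "real m ^ card P \<le> 4 ^ m"
    by (metis of_nat_le_iff of_nat_numeral of_nat_power)
  then have "ln (real m ^ card P) \<le> ln (4 ^ m)"
    using assms by simp
  then show ?thesis
    using assms by (simp add: P_def ln_realpow)
qed

lemma sum_inverse_primes_between_double_le:
  fixes m :: nat
  assumes "m \<ge> 2"
  shows "(\<Sum>p\<in>{p. prime p \<and> m < p \<and> p \<le> 2*m}. 1 / real p) \<le> 2 * ln 2 / ln m"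
proof -
  define P where "P = {p. prime p \<and> m < p \<and> p \<le> 2*m}"
  have "(\<Sum>p\<in>P. 1 / real p) \<le> (\<Sum>p\<in>P. 1 / real m)"
    using assms by (intro sum_mono) (auto simp: P_def intro!: divide_left_mono)
  also have "\<dots> = real (card P) / real m"
    by simp
  also have "\<dots> \<le> 2 * ln 2 / ln m"
  proof -
    have "real (card P) * ln m \<le> real m * (2 * ln 2)"
      using card_primes_between_double_le[of m] assms ln_realpow[of 2 2] by (simp add: P_def)
    then show ?thesis
      using assms by (simp add: field_simps)
  qed
  finally show ?thesis
    by (simp add: P_def)
qed

lemma sum_inverse_primes_between_powers_of_two_le:
  fixes a b :: nat
  assumes "1 \<le> a" and "a \<le> b"
  shows "(\<Sum>p\<in>{p. prime p \<and> 2^a < p \<and> p \<le> 2^b}. 1 / real p) \<le> (\<Sum>j=a..<b. 2 / real j)"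
  using assms(2)
proof (induction b rule: dec_induct)
  case base
  have empty: "{p. prime p \<and> 2^a < p \<and> p \<le> (2::nat) ^ a} = {}"
    by auto
  show ?case
    unfolding empty by simp
next
  case (step b)
  have pow_le: "(2::nat) ^ a \<le> 2 ^ b"
    using step.hyps by (simp add: power_increasing)
  have split: "{p. prime p \<and> 2^a < p \<and> p \<le> (2::nat) ^ Suc b} =
     {p. prime p \<and> 2^a < p \<and> p \<le> 2^b} \<union> {p. prime p \<and> 2^b < p \<and> p \<le> 2*2^b}"
    by (auto intro: le_less_trans[OF pow_le])
  have "(\<Sum>p\<in>{p. prime p \<and> 2^a < p \<and> p \<le> 2 ^ Suc b}. 1 / real p) =
     (\<Sum>p\<in>{p. prime p \<and> 2^a < p \<and> p \<le> 2^b}. 1 / real p) +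
     (\<Sum>p\<in>{p. prime p \<and> 2^b < p \<and> p \<le> 2*2^b}. 1 / real p)"
    unfolding split by (rule sum.union_disjoint) (auto simp: finite_primes_between)
  also have "\<dots> \<le> (\<Sum>j=a..<b. 2 / real j) + 2 * ln 2 / ln (2 ^ b)"
  proof (rule add_mono[OF step.IH])
    have "(2::nat) \<le> 2 ^ b"
      using step.hyps assms(1) by (simp add: self_le_power)
    then show "(\<Sum>p\<in>{p. prime p \<and> 2^b < p \<and> p \<le> 2*2^b}. 1 / real p) \<le> 2 * ln 2 / ln (2 ^ b)"
      using sum_inverse_primes_between_double_le[of "2^b"] by simp
  qed
  also have "2 * ln 2 / ln (2 ^ b) = 2 / real b"
    by (simp add: ln_realpow)
  finally show ?case
    using step.hyps by simp
qed

lemma sum_inverse_le_ln: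
  fixes a b :: nat
  assumes "1 \<le> a" and "a < b"
  shows "(\<Sum>j=a..<b. 1 / real j) \<le> 1 / real a + ln (real (b - 1) / real a)"
  using Suc_leI[OF assms(2)]
proof (induction b rule: dec_induct)
  case base
  then show ?case
    using assms by simp
next
  case (step b)
  have b: "real b - 1 > 0" "real (b - 1) = real b - 1"
    using step.hyps assms by auto
  have "ln ((real b - 1) / real b) \<le> (real b - 1) / real b - 1"
    using b by (intro ln_le_minus_one) simp
  then have "1 / real b \<le> ln (real b) - ln (real b - 1)"
    using b by (simp add: ln_div field_simps)
  with step.IH have "(\<Sum>j=a..<Suc b. 1 / real j) \<le> 1 / real a + ln ((real b - 1) / real a) + (ln (real b) - ln (real b - 1))"
    using step.hyps b by simp
  also have "\<dots> = 1 / real a + ln (real (Suc b - 1) / real a)"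
    using b assms by (simp add: ln_div)
  finally show ?case .
qed

lemma sum_inverse_primes_between_le:
  fixes x :: real and n :: nat
  assumes "2 < x" and "x < real n"
  shows "(\<Sum>p\<in>{p. prime p \<and> x < real p \<and> p \<le> n}. 1 / real p)
           \<le> 2 + 2 * ln (log 2 n / (log 2 x - 1))"
proof -
  define a where "a = nat \<lfloor>log 2 x\<rfloor>"
  define b where "b = nat \<lceil>log 2 n\<rceil>"
  have log_x: "1 < log 2 x" "log 2 x < log 2 n"
    using assms by (simp_all add: less_log_iff)
  then have a: "log 2 x - 1 < real a" "real a \<le> log 2 x" and b: "log 2 n \<le> real b" "real b < log 2 n + 1"
    unfolding a_def b_def by linarith+
  then have ab: "1 \<le> a" "a < b"
    using log_x by linarith+
  have two_pow_a: "real (2 ^ a) \<le> x"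
    using a(2) assms(1) by (simp add: le_log_iff flip: powr_realpow)
  have "real n \<le> real (2 ^ b)"
    using b(1) assms by (simp add: log_le_iff flip: powr_realpow)
  then have two_pow_b: "n \<le> 2 ^ b"
    by (simp only: of_nat_le_iff)
  have "2 ^ a < p \<and> p \<le> 2 ^ b" if "x < real p" "p \<le> n" for p
  proof -
    have "real (2 ^ a) < real p"
      using two_pow_a that(1) by linarith
    then show ?thesis
      using two_pow_b that(2) by (simp only: of_nat_less_iff) simp
  qed
  then have "{p. prime p \<and> x < real p \<and> p \<le> n} \<subseteq> {p. prime p \<and> 2^a < p \<and> p \<le> 2^b}"
    by auto
  then have "(\<Sum>p\<in>{p. prime p \<and> x < real p \<and> p \<le> n}. 1 / real p)
               \<le> (\<Sum>p\<in>{p. prime p \<and> 2^a < p \<and> p \<le> 2^b}. 1 / real p)"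
    by (intro sum_mono2 finite_primes_between) auto
  also have "\<dots> \<le> 2 * (\<Sum>j=a..<b. 1 / real j)"
    using sum_inverse_primes_between_powers_of_two_le[of a b] ab by (simp add: sum_distrib_left)
  also have "\<dots> \<le> 2 * (1 / real a + ln (real (b - 1) / real a))"
    using sum_inverse_le_ln[OF ab] by simp
  also have "\<dots> \<le> 2 * (1 + ln (log 2 n / (log 2 x - 1)))"
  proof -
    have "real (b - 1) / real a \<le> log 2 n / (log 2 x - 1)"
      using a b ab log_x by (intro frac_le) (auto simp: of_nat_diff)
    then have "ln (real (b - 1) / real a) \<le> ln (log 2 n / (log 2 x - 1))"
      using ab by (intro ln_mono) (auto simp: of_nat_diff)
    moreover have "1 / real a \<le> 1"
      using ab by simp
    ultimately show ?thesis
      by (intro mult_left_mono add_mono) auto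
  qed
  finally show ?thesis
    by simp
qed

lemma sum_multiples_ge:
  fixes f :: "nat \<Rightarrow> real"
  assumes "0 < p" and "\<And>i. i \<in> {1..n} \<Longrightarrow> 0 \<le> 1 / real n + f i"
  shows "- 1 / real p \<le> (\<Sum>l=1..n div p. f (l * p))"
proof -
  have "real (n div p) * real p \<le> real n"
    by (metis of_nat_le_iff of_nat_mult div_times_less_eq_dividend)
  then have "- 1 / real p \<le> - real (n div p) / real n"
    using assms(1) by (cases "n = 0") (auto simp: field_simps)
  also have "\<dots> = (\<Sum>l=1..n div p. - (1 / real n))"
    by simp
  also have "\<dots> \<le> (\<Sum>l=1..n div p. f (l * p))"
  proof (intro sum_mono)
    fix l assume "l \<in> {1..n div p}"
    then have "l * p \<in> {1..n}"
      using assms(1) by (auto simp: less_eq_div_iff_mult_less_eq)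
    then show "- (1 / real n) \<le> f (l * p)"
      using assms(2) by fastforce
  qed
  finally show ?thesis .
qed

lemma abs_sum_prime_multiples_le:
  fixes f :: "nat \<Rightarrow> real" and x :: real
  assumes "2 < x" and "x < real n"
    and nonneg: "\<And>i. i \<in> {1..n} \<Longrightarrow> 0 \<le> 1 / real n + f i"
    and bound: "\<And>p. prime p \<Longrightarrow> x < real p \<Longrightarrow> (\<Sum>l=1..n div p. f (l * p)) \<le> C / real p"
  shows "\<bar>\<Sum>p\<in>{p. prime p \<and> x < real p \<and> p \<le> n}. 1 / real p + (\<Sum>l=1..n div p. f (l * p))\<bar>
           \<le> \<bar>1 + C\<bar> * (2 + 2 * ln (log 2 n / (log 2 x - 1)))"
proof -
  define P where "P = {p. prime p \<and> x < real p \<and> p \<le> n}"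
  define t where "t p = 1 / real p + (\<Sum>l=1..n div p. f (l * p))" for p
  have t: "0 \<le> t p \<and> t p \<le> \<bar>1 + C\<bar> * (1 / real p)" if "p \<in> P" for p
  proof
    have p: "prime p" "x < real p"
      using that by (auto simp: P_def)
    then show "0 \<le> t p"
      using sum_multiples_ge[of p n f] nonneg by (simp add: t_def prime_gt_0_nat)
    have "t p \<le> (1 + C) * (1 / real p)"
      using bound[OF p] by (simp add: t_def add_divide_distrib)
    also have "\<dots> \<le> \<bar>1 + C\<bar> * (1 / real p)"
      by (intro mult_right_mono) auto
    finally show "t p \<le> \<bar>1 + C\<bar> * (1 / real p)" .
  qed
  then have "\<bar>\<Sum>p\<in>P. t p\<bar> = (\<Sum>p\<in>P. t p)"
    by (intro abs_of_nonneg sum_nonneg) auto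
  also have "\<dots> \<le> (\<Sum>p\<in>P. \<bar>1 + C\<bar> * (1 / real p))"
    using t by (intro sum_mono) auto
  also have "\<dots> = \<bar>1 + C\<bar> * (\<Sum>p\<in>P. 1 / real p)"
    by (simp add: sum_distrib_left)
  also have "\<dots> \<le> \<bar>1 + C\<bar> * (2 + 2 * ln (log 2 n / (log 2 x - 1)))"
    using sum_inverse_primes_between_le[OF assms(1,2)] by (auto simp: P_def intro!: mult_left_mono)
  finally show ?thesis
    by (simp add: P_def t_def)
qed

theorem lemma3:
  fixes eps :: "nat \<Rightarrow> nat \<Rightarrow> real"
  assumes nonneg: "\<And>n i. n \<ge> 1 \<Longrightarrow> i \<in> {1..n} \<Longrightarrow> 1 / real n + eps i n \<ge> 0"
    and total: "\<And>n. n \<ge> 1 \<Longrightarrow> (\<Sum>i=1..n. 1 / real n + eps i n) = 1"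
    and bound: "\<exists>C::real. \<forall>n p. n \<ge> 1 \<longrightarrow> ln (ln (real n)) > 0 \<longrightarrow> prime p \<longrightarrow> real p > alpha n
                  \<longrightarrow> (\<Sum>l=1..n div p. eps (l * p) n) \<le> C / real p"
  shows "(\<lambda>n. (1 / sqrt (ln (ln (real n)))) *
            (\<Sum>p\<in>{p. prime p \<and> alpha n < real p \<and> p \<le> n}.
               1 / real p + (\<Sum>l=1..n div p. eps (l * p) n))) \<longlonglongrightarrow> 0"
proof -
  obtain C where C: "\<And>n p. n \<ge> 1 \<Longrightarrow> ln (ln (real n)) > 0 \<Longrightarrow> prime p \<Longrightarrow> real p > alpha n
                  \<Longrightarrow> (\<Sum>l=1..n div p. eps (l * p) n) \<le> C / real p"
    using bound by blast
  define B where "B n = 2 + 2 * ln (log 2 n / (log 2 (alpha n) - 1))" for n :: nat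
  have "(\<lambda>n. B n / sqrt (ln (ln (real n)))) \<longlonglongrightarrow> 0"
    unfolding B_def alpha_def by real_asymp
  then have B_lim: "(\<lambda>n. \<bar>1 + C\<bar> * (B n / sqrt (ln (ln (real n))))) \<longlonglongrightarrow> 0"
    by (rule tendsto_mult_right_zero)
  have "\<forall>\<^sub>F n in sequentially. 0 < ln (ln (real n)) \<and> 2 < alpha n \<and> alpha n < real n"
    unfolding alpha_def by (intro eventually_conj) real_asymp+
  then show ?thesis
  proof (rule Lim_null_comparison[OF eventually_mono B_lim], elim conjE)
    fix n assume n: "0 < ln (ln (real n))" "2 < alpha n" "alpha n < real n"
    then have "n \<ge> 1"
      by (cases n) auto
    with n have "\<bar>\<Sum>p\<in>{p. prime p \<and> alpha n < real p \<and> p \<le> n}. 1 / real p + (\<Sum>l=1..n div p. eps (l * p) n)\<bar>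
                   \<le> \<bar>1 + C\<bar> * B n"
      unfolding B_def by (intro abs_sum_prime_multiples_le nonneg C) auto
    with n(1) show "norm ((1 / sqrt (ln (ln (real n)))) *
        (\<Sum>p\<in>{p. prime p \<and> alpha n < real p \<and> p \<le> n}. 1 / real p + (\<Sum>l=1..n div p. eps (l * p) n)))
          \<le> \<bar>1 + C\<bar> * (B n / sqrt (ln (ln (real n))))"
      by (simp add: abs_mult divide_right_mono less_imp_le)
  qed
qed

end
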